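(* Every Abel sequentially compact subset of $\mathbb{R}$ is ward compact.
   Context: A sequence $(p_n)_{n\ge0}$ is Abel convergent to $\ell$ if $\sum_{k=0}^{\infty}p_k x^k$ converges for every $0\le x<1$ and $\lim_{x\to 1^-}(1-x)\sum_{k=0}^{\infty}p_k x^k=\ell$. A subset $F\subseteq\mathbb{R}$ is Abel sequentially compact if every sequence of points of $F$ has a subsequence Abel convergent to a limit belonging to $F$. A sequence $(p_n)$ is quasi-Cauchy if $\lim_{n\to\infty}(p_{n+1}-p_n)=0$. A subset $E\subseteq\mathbb{R}$ is ward compact if every sequence of points of $E$ has a quasi-Cauchy subsequence. *)

theory Defs
  imports "HOL-Analysis.Analysis"
begin

definition abel_convergent :: "(nat \<Rightarrow> real) \<Rightarrow> real \<Rightarrow> bool" where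
  "abel_convergent p l \<longleftrightarrow>
     (\<forall>x. 0 \<le> x \<and> x < 1 \<longrightarrow> summable (\<lambda>k. p k * (x::real) ^ k)) \<and>
     ((\<lambda>x. (1 - x) * (\<Sum>k. p k * x ^ k)) \<longlongrightarrow> l) (at_left 1)"

definition abel_seq_compact :: "real set \<Rightarrow> bool" where
  "abel_seq_compact F \<longleftrightarrow>
     (\<forall>p::nat \<Rightarrow> real. (\<forall>n. p n \<in> F) \<longrightarrow>
        (\<exists>(r::nat \<Rightarrow> nat) l. strict_mono r \<and> l \<in> F \<and> abel_convergent (p \<circ> r) l))"

definition quasi_cauchy :: "(nat \<Rightarrow> real) \<Rightarrow> bool" where
  "quasi_cauchy p \<longleftrightarrow> (\<lambda>n. p (Suc n) - p n) \<longlonglongrightarrow> 0"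

definition ward_compact :: "real set \<Rightarrow> bool" where
  "ward_compact E \<longleftrightarrow>
     (\<forall>p. (\<forall>n. p n \<in> E) \<longrightarrow> (\<exists>r::nat \<Rightarrow> nat. strict_mono r \<and> quasi_cauchy (p \<circ> r)))"

end

theory Submission
  imports Defs "HOL-Real_Asymp.Real_Asymp"
begin

text \<open>An Abel sequentially compact set is bounded: a sequence in it with \<open>\<bar>p n\<bar> \<ge> n + 1\<close>
  of constant sign has no Abel convergent subsequence, because \<open>(1 - x) \<Sum> (k + 1) x\<^sup>k =
  1 / (1 - x)\<close> blows up as \<open>x \<rightarrow> 1\<^sup>-\<close>. By Bolzano--Weierstrass every sequence in a bounded set
  has a convergent, hence quasi-Cauchy, subsequence.\<close>

lemma abel_convergent_cmult:
  assumes "abel_convergent p l"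
  shows "abel_convergent (\<lambda>k. c * p k) (c * l)"
proof -
  have summable: "summable (\<lambda>k. p k * x ^ k)" if "0 \<le> x" "x < 1" for x :: real
    using assms that unfolding abel_convergent_def by blast
  have "\<forall>\<^sub>F x in at_left (1::real). 0 \<le> x \<and> x < 1"
    by (auto simp: eventually_at_left_field intro!: exI[of _ 0])
  then have "\<forall>\<^sub>F x in at_left (1::real).
      c * ((1 - x) * (\<Sum>k. p k * x ^ k)) = (1 - x) * (\<Sum>k. c * p k * x ^ k)"
  proof eventually_elim
    case (elim x)
    then have "(\<Sum>k. c * p k * x ^ k) = c * (\<Sum>k. p k * x ^ k)"
      by (simp only: mult.assoc suminf_mult summable)
    then show ?case
      by simp
  qed
  moreover have "((\<lambda>x. c * ((1 - x) * (\<Sum>k. p k * x ^ k))) \<longlongrightarrow> c * l) (at_left 1)"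
    using assms unfolding abel_convergent_def by (intro tendsto_mult_left) blast
  ultimately have "((\<lambda>x. (1 - x) * (\<Sum>k. c * p k * x ^ k)) \<longlongrightarrow> c * l) (at_left 1)"
    by (rule tendsto_cong[THEN iffD1])
  moreover have "summable (\<lambda>k. c * p k * x ^ k)" if "0 \<le> x" "x < 1" for x :: real
    using summable[OF that] by (simp only: mult.assoc summable_mult)
  ultimately show ?thesis
    unfolding abel_convergent_def by blast
qed

lemma not_abel_convergent_if_ge_Suc:
  fixes p :: "nat \<Rightarrow> real"
  assumes ge: "\<And>k. p k \<ge> real (Suc k)"
  shows "\<not> abel_convergent p l"
proof
  assume abel: "abel_convergent p l"
  have lower: "1 / (1 - x) \<le> (1 - x) * (\<Sum>k. p k * x ^ k)" if "0 \<le> x" "x < 1" for x :: real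
  proof -
    have "(\<lambda>k. real (Suc k) * x ^ k) sums (1 / (1 - x)\<^sup>2)"
      using that by (intro geometric_deriv_sums) auto
    moreover have "summable (\<lambda>k. p k * x ^ k)"
      using abel that unfolding abel_convergent_def by blast
    ultimately have "1 / (1 - x)\<^sup>2 \<le> (\<Sum>k. p k * x ^ k)"
      using ge that by (intro sums_le[OF _ _ summable_sums]) (auto intro: mult_right_mono)
    then have "(1 - x) * (1 / (1 - x)\<^sup>2) \<le> (1 - x) * (\<Sum>k. p k * x ^ k)"
      using that by (intro mult_left_mono) auto
    with that show ?thesis
      by (simp add: power2_eq_square)
  qed
  have "\<forall>\<^sub>F x in at_left (1::real). 0 \<le> x \<and> x < 1"
    by (auto simp: eventually_at_left_field intro!: exI[of _ 0])
  then have "\<forall>\<^sub>F x in at_left (1::real). 1 / (1 - x) \<le> (1 - x) * (\<Sum>k. p k * x ^ k)"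
    by eventually_elim (use lower in blast)
  moreover have "filterlim (\<lambda>x::real. 1 / (1 - x)) at_top (at_left 1)"
    by real_asymp
  ultimately have "filterlim (\<lambda>x. (1 - x) * (\<Sum>k. p k * x ^ k)) at_top (at_left (1::real))"
    by (rule filterlim_at_top_mono[rotated])
  moreover have "((\<lambda>x. (1 - x) * (\<Sum>k. p k * x ^ k)) \<longlongrightarrow> l) (at_left 1)"
    using abel unfolding abel_convergent_def by blast
  ultimately show False
    by (rule filterlim_at_top_nhds) simp
qed

lemma unbounded_real_set_escapes:
  fixes F :: "real set"
  assumes "\<not> bounded F"
  obtains p and s :: real where "\<And>n. p n \<in> F" "\<bar>s\<bar> = 1" "\<And>n. real (Suc n) \<le> s * p n"
proof -
  have "\<exists>s::real. \<bar>s\<bar> = 1 \<and> (\<forall>n. \<exists>x\<in>F. real (Suc n) \<le> s * x)"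
  proof (rule ccontr)
    assume "\<not> ?thesis"
    then obtain n m where "\<forall>x\<in>F. x < real (Suc n)" "\<forall>x\<in>F. - x < real (Suc m)"
      by (metis abs_1 abs_minus_cancel mult_1 mult_minus1 not_le)
    then have "\<forall>x\<in>F. norm x \<le> real (Suc n) + real (Suc m)"
      by force
    with assms show False
      unfolding bounded_iff by blast
  qed
  then show thesis
    by (metis that)
qed

lemma bounded_if_abel_seq_compact:
  assumes "abel_seq_compact F"
  shows "bounded F"
proof (rule ccontr)
  assume "\<not> bounded F"
  then obtain p and s :: real
    where in_F: "\<And>n. p n \<in> F" and ge: "\<And>n. real (Suc n) \<le> s * p n"
    using unbounded_real_set_escapes by blast
  obtain r l where r: "strict_mono r" and abel: "abel_convergent (p \<circ> r) l"
    using assms in_F unfolding abel_seq_compact_def by blast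
  have "real (Suc k) \<le> s * (p \<circ> r) k" for k
    using ge[of "r k"] seq_suble[OF r, of k] by simp
  then have "\<not> abel_convergent (\<lambda>k. s * (p \<circ> r) k) (s * l)"
    by (rule not_abel_convergent_if_ge_Suc)
  with abel_convergent_cmult[OF abel] show False
    by blast
qed

lemma quasi_cauchy_if_convergent:
  assumes "p \<longlonglongrightarrow> l"
  shows "quasi_cauchy p"
  using tendsto_diff[OF LIMSEQ_Suc[OF assms] assms] unfolding quasi_cauchy_def by simp

lemma ward_compact_if_bounded:
  assumes "bounded E"
  shows "ward_compact E"
  unfolding ward_compact_def
proof (intro allI impI)
  fix p :: "nat \<Rightarrow> real"
  assume "\<forall>n. p n \<in> E"
  then have "bounded (range p)"
    using assms by (meson bounded_subset image_subsetI)
  then obtain l r where "strict_mono r" "(p \<circ> r) \<longlonglongrightarrow> l"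
    using bounded_imp_convergent_subsequence by blast
  then show "\<exists>r. strict_mono r \<and> quasi_cauchy (p \<circ> r)"
    using quasi_cauchy_if_convergent by blast
qed

theorem corollary19:
  fixes F :: "real set"
  assumes "abel_seq_compact F"
  shows "ward_compact F"
  using assms by (intro ward_compact_if_bounded bounded_if_abel_seq_compact)

end
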